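(* Let $\mathcal{H}_{C}=\mathcal{H}_{A}\oplus\mathcal{H}_{B}$ be a finite-dimensional Hilbert space decomposed into two nontrivial orthogonal subspaces with orthogonal projectors $\hat P_{AA},\hat P_{BB}$ ($\hat P_{AA}\hat P_{BB}=0$, $\hat P_{AA}+\hat P_{BB}=\hat I_{CC}$). Let $\Phi_{CC}$ be a quantum channel (completely positive trace-preserving map) on $\mathcal{L}(\mathcal{H}_C)$ with Kraus set $\{\hat M^{(j)}_{CC}\}_j$. Then $\Phi_{CC}$ is a Partially Coherent Direct Sum (PCDS) channel if and only if every Kraus operator is block diagonal, i.e. $\hat M^{(j)}_{CC}=\hat M^{(j)}_{AA}+\hat M^{(j)}_{BB}$ for all $j$, equivalently $\hat M^{(j)}_{AB}=\hat M^{(j)}_{BA}=0$ for all $j$, where $\hat M^{(j)}_{XY}:=\hat P_{XX}\hat M^{(j)}_{CC}\hat P_{YY}$.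
   Context: For $X,Y\in\{A,B\}$ and an operator $\hat\Theta_{CC}$ on $\mathcal{H}_C$ write $\hat\Theta_{XY}:=\hat P_{XX}\hat\Theta_{CC}\hat P_{YY}$, viewed as a linear map $\mathcal{H}_Y\to\mathcal{H}_X$. A channel $\Phi_{CC}$ on $\mathcal{H}_C$ is called PCDS if there exist linear maps $\Phi_{AA}$ on $\mathcal{L}(\mathcal{H}_A)$, $\Phi_{BB}$ on $\mathcal{L}(\mathcal{H}_B)$, $\Phi^{(off)}_{AB}$ on $\mathcal{L}(\mathcal{H}_B\to\mathcal{H}_A)$ and $\Phi^{(off)}_{BA}$ on $\mathcal{L}(\mathcal{H}_A\to\mathcal{H}_B)$ such that for every operator $\hat\Theta_{CC}$, $\Phi_{CC}[\hat\Theta_{CC}]=\Phi_{AA}[\hat\Theta_{AA}]+\Phi_{BB}[\hat\Theta_{BB}]+\Phi^{(off)}_{AB}[\hat\Theta_{AB}]+\Phi^{(off)}_{BA}[\hat\Theta_{BA}]$, i.e. in block form $\begin{pmatrix}\hat\Theta_{AA}&\hat\Theta_{AB}\\ \hat\Theta_{BA}&\hat\Theta_{BB}\end{pmatrix}\mapsto\begin{pmatrix}\Phi_{AA}[\hat\Theta_{AA}]&\Phi^{(off)}_{AB}[\hat\Theta_{AB}]\\ \Phi^{(off)}_{BA}[\hat\Theta_{BA}]&\Phi_{BB}[\hat\Theta_{BB}]\end{pmatrix}$. *)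

theory Defs
  imports "HOL-Analysis.Analysis"
begin

text \<open>Operators on the finite-dimensional Hilbert space H_C = C^'n are complex
  'n x 'n matrices; product is (**), identity is mat 1.\<close>

type_synonym 'n op = "complex^'n^'n"

definition adj :: "'n::finite op \<Rightarrow> 'n op" where
  "adj M = (\<chi> i j. cnj (M $ j $ i))"

definition csc :: "complex \<Rightarrow> 'n::finite op \<Rightarrow> 'n op" where
  "csc c M = (\<chi> i j. c * M $ i $ j)"

definition orth_proj :: "'n::finite op \<Rightarrow> bool" where
  "orth_proj P \<longleftrightarrow> adj P = P \<and> P ** P = P"

definition blk :: "'n::finite op \<Rightarrow> 'n op \<Rightarrow> 'n op \<Rightarrow> 'n op" where
  "blk PX T PY = PX ** T ** PY"

text \<open>The space L(H_Y -> H_X), realised as operators T with P_X T P_Y = T.\<close>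
definition blk_space :: "'n::finite op \<Rightarrow> 'n op \<Rightarrow> 'n op set" where
  "blk_space PX PY = {T. PX ** T ** PY = T}"

definition lin_on_blk :: "'n::finite op \<Rightarrow> 'n op \<Rightarrow> ('n op \<Rightarrow> 'n op) \<Rightarrow> bool" where
  "lin_on_blk PX PY f \<longleftrightarrow>
     (\<forall>T\<in>blk_space PX PY. f T \<in> blk_space PX PY) \<and>
     (\<forall>S\<in>blk_space PX PY. \<forall>T\<in>blk_space PX PY. f (S + T) = f S + f T) \<and>
     (\<forall>c. \<forall>T\<in>blk_space PX PY. f (csc c T) = csc c (f T))"

definition kraus_map :: "'n::finite op list \<Rightarrow> 'n op \<Rightarrow> 'n op" where
  "kraus_map Ms T = (\<Sum>M\<leftarrow>Ms. M ** T ** adj M)"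

definition kraus_set :: "'n::finite op list \<Rightarrow> bool" where
  "kraus_set Ms \<longleftrightarrow> (\<Sum>M\<leftarrow>Ms. adj M ** M) = mat 1"

definition PCDS :: "'n::finite op \<Rightarrow> 'n op \<Rightarrow> ('n op \<Rightarrow> 'n op) \<Rightarrow> bool" where
  "PCDS PA PB \<Phi> \<longleftrightarrow>
     (\<exists>\<Phi>AA \<Phi>BB \<Phi>AB \<Phi>BA.
        lin_on_blk PA PA \<Phi>AA \<and> lin_on_blk PB PB \<Phi>BB \<and>
        lin_on_blk PA PB \<Phi>AB \<and> lin_on_blk PB PA \<Phi>BA \<and>
        (\<forall>T. \<Phi> T = \<Phi>AA (blk PA T PA) + \<Phi>BB (blk PB T PB)
                   + \<Phi>AB (blk PA T PB) + \<Phi>BA (blk PB T PA)))"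

end

theory Submission
  imports Defs
begin

text \<open>If every Kraus operator M is block diagonal, it commutes with both projectors, so
  \<open>T \<mapsto> M T M\<^sup>\<dagger>\<close> maps every block space into itself and the channel itself serves as all
  four block maps. Conversely, a PCDS channel maps P_A into the AA block, so
  \<open>P_B \<Phi>(P_A) P_B = \<Sum>\<^sub>j (P_B M\<^sub>j P_A)(P_B M\<^sub>j P_A)\<^sup>\<dagger>\<close> vanishes; a sum of positive
  operators is zero only if every summand is, whence \<open>P_B M\<^sub>j P_A = 0\<close>, and symmetrically.\<close>

lemma matrix_add_rdistrib: "((A::'a::semiring_1^'n^'m) + B) ** C = A ** C + B ** C"
  by (vector matrix_matrix_mult_def sum.distrib[symmetric] field_simps)

lemma sum_list_matrix_mul_left:
  "(A::'a::semiring_1^'n^'m) ** (\<Sum>x\<leftarrow>xs. f x) = (\<Sum>x\<leftarrow>xs. A ** f x)"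
  by (induction xs) (simp_all add: matrix_add_ldistrib)

lemma sum_list_matrix_mul_right:
  "(\<Sum>x\<leftarrow>xs. f x) ** (A::'a::semiring_1^'n^'m) = (\<Sum>x\<leftarrow>xs. f x ** A)"
  by (induction xs) (simp_all add: matrix_add_rdistrib)

lemma sum_list_vec_nth: "(\<Sum>x\<leftarrow>xs. f x) $ i = (\<Sum>x\<leftarrow>xs. f x $ i)"
  by (induction xs) simp_all

lemma adj_matrix_mul: "adj ((A::'n::finite op) ** B) = adj B ** adj A"
  by (simp add: adj_def matrix_matrix_mult_def vec_eq_iff mult.commute)

lemma adj_zero [simp]: "adj (0::'n::finite op) = 0"
  by (simp add: adj_def vec_eq_iff)

lemma csc_matrix_mul: "A ** csc c T ** B = csc c ((A::'n::finite op) ** T ** B)"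
  by (simp add: csc_def matrix_matrix_mult_def vec_eq_iff sum_distrib_left sum_distrib_right
      algebra_simps)

lemma csc_add: "csc c ((A::'n::finite op) + B) = csc c A + csc c B"
  by (simp add: csc_def vec_eq_iff algebra_simps)

lemma csc_zero [simp]: "csc c (0::'n::finite op) = 0"
  by (simp add: csc_def vec_eq_iff)

lemma diag_mult_adj: "((X::'n::finite op) ** adj X) $ i $ i = of_real (\<Sum>k\<in>UNIV. (cmod (X $ i $ k))\<^sup>2)"
  unfolding of_real_sum complex_norm_square by (simp add: matrix_matrix_mult_def adj_def)

lemma sum_list_mult_adj_eq_0:
  assumes sum: "(\<Sum>x\<leftarrow>xs. X x ** adj (X x)) = (0::'n::finite op)" and x: "x \<in> set xs"
  shows "X x = 0"
proof (rule ccontr)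
  assume "X x \<noteq> 0"
  then obtain i k where ik: "X x $ i $ k \<noteq> 0" by (metis vec_eq_iff zero_index)
  define g where "g y = (\<Sum>k\<in>UNIV. (cmod (X y $ i $ k))\<^sup>2)" for y
  have g_nonneg: "0 \<le> g y" for y
    unfolding g_def by (simp add: sum_nonneg)
  have "(\<Sum>x\<leftarrow>xs. X x ** adj (X x)) $ i $ i = (\<Sum>y\<leftarrow>xs. of_real (g y))"
    by (simp add: sum_list_vec_nth diag_mult_adj g_def)
  also have "\<dots> = of_real (\<Sum>y\<leftarrow>xs. g y)"
    using sum_list_of_real[of "map g xs"] by (simp add: o_def)
  finally have "of_real (\<Sum>y\<leftarrow>xs. g y) = (0::complex)"
    using sum by simp
  then have "(\<Sum>y\<leftarrow>xs. g y) = 0" by simp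
  with x g_nonneg have "g x = 0"
    using sum_list_nonneg_eq_0_iff[of "map g xs"] by auto
  then have "(cmod (X x $ i $ k))\<^sup>2 = 0"
    unfolding g_def by (simp add: sum_nonneg_eq_0_iff)
  with ik show False by simp
qed

lemma adj_mult_eq_0_commute:
  assumes "adj P = P" "adj Q = Q" "(P::'n::finite op) ** Q = 0"
  shows "Q ** P = 0"
  using arg_cong[OF assms(3), of adj] by (simp add: adj_matrix_mul assms(1,2))

lemma blk_decomposition:
  assumes "P + Q = mat 1"
  shows "(T::'n::finite op) = blk P T P + blk Q T Q + blk P T Q + blk Q T P"
proof -
  have "T = (P + Q) ** T ** (P + Q)" using assms by simp
  then show ?thesis
    unfolding blk_def by (simp add: matrix_add_ldistrib matrix_add_rdistrib add_ac)
qed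

lemma block_diagonal_commute:
  assumes PQ: "P + Q = mat 1" and "P ** M ** Q = 0" "Q ** M ** P = (0::'n::finite op)"
  shows "P ** M = M ** P"
proof -
  have "P ** M = P ** M ** (P + Q)" using PQ by simp
  also have "\<dots> = (P + Q) ** M ** P"
    using assms(2,3) by (simp add: matrix_add_ldistrib matrix_add_rdistrib)
  also have "\<dots> = M ** P" using PQ by simp
  finally show ?thesis .
qed

lemma kraus_map_add: "kraus_map Ms (S + T) = kraus_map Ms S + kraus_map Ms (T::'n::finite op)"
  unfolding kraus_map_def
  by (induction Ms) (simp_all add: matrix_add_ldistrib matrix_add_rdistrib add_ac)

lemma kraus_map_csc: "kraus_map Ms (csc c T) = csc c (kraus_map Ms (T::'n::finite op))"
  unfolding kraus_map_def
  by (induction Ms) (simp_all add: csc_matrix_mul csc_add)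

lemma kraus_map_compression:
  assumes "adj P = P" "P ** P = P" "adj Q = Q"
  shows "Q ** kraus_map Ms P ** Q = (\<Sum>M\<leftarrow>Ms. (Q ** M ** P) ** adj (Q ** M ** (P::'n::finite op)))"
proof -
  have "Q ** (M ** P ** adj M) ** Q = (Q ** M ** P) ** adj (Q ** M ** P)" for M
  proof -
    have "(Q ** M ** P) ** adj (Q ** M ** P) = Q ** M ** (P ** P) ** adj M ** Q"
      unfolding adj_matrix_mul assms(1,3) by (simp only: matrix_mul_assoc)
    also have "\<dots> = Q ** (M ** P ** adj M) ** Q"
      unfolding assms(2) by (simp only: matrix_mul_assoc)
    finally show ?thesis ..
  qed
  then show ?thesis
    unfolding kraus_map_def sum_list_matrix_mul_left sum_list_matrix_mul_right by (simp only:)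
qed

lemma kraus_map_compression_eq_0:
  assumes "orth_proj P" "orth_proj Q" "Q ** kraus_map Ms P ** Q = 0" "M \<in> set Ms"
  shows "Q ** M ** P = (0::'n::finite op)"
proof (rule sum_list_mult_adj_eq_0[OF _ assms(4)])
  show "(\<Sum>M\<leftarrow>Ms. (Q ** M ** P) ** adj (Q ** M ** P)) = 0"
    using assms(1-3) kraus_map_compression[of P Q Ms] by (simp add: orth_proj_def)
qed

lemma kraus_map_blk_space:
  assumes comm: "\<forall>M\<in>set Ms. PX ** M = M ** PX \<and> PY ** M = M ** PY"
    and "adj PY = PY" and T: "T \<in> blk_space PX (PY::'n::finite op)"
  shows "kraus_map Ms T \<in> blk_space PX PY"
proof -
  have "PX ** (M ** T ** adj M) ** PY = M ** T ** adj M" if M: "M \<in> set Ms" for M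
  proof -
    have "adj (PY ** M) = adj (M ** PY)"
      using comm M by simp
    then have adj_comm: "adj M ** PY = PY ** adj M"
      by (simp add: adj_matrix_mul assms(2))
    have "PX ** (M ** T ** adj M) ** PY = (PX ** M) ** T ** (adj M ** PY)"
      by (simp add: matrix_mul_assoc)
    also have "\<dots> = M ** (PX ** T ** PY) ** adj M"
      using comm M adj_comm by (simp add: matrix_mul_assoc)
    finally show ?thesis
      using T by (simp add: blk_space_def)
  qed
  then show ?thesis
    by (simp add: blk_space_def kraus_map_def sum_list_matrix_mul_left sum_list_matrix_mul_right
        cong: map_cong)
qed

lemma lin_on_blk_kraus_map:
  assumes "\<forall>M\<in>set Ms. PX ** M = M ** PX \<and> PY ** M = M ** PY" and "adj PY = (PY::'n::finite op)"
  shows "lin_on_blk PX PY (kraus_map Ms)"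
  using kraus_map_blk_space[OF assms] by (simp add: lin_on_blk_def kraus_map_add kraus_map_csc)

lemma kraus_map_PCDS:
  assumes "\<forall>M\<in>set Ms. PA ** M = M ** PA \<and> PB ** M = M ** PB"
    and "adj PA = PA" "adj PB = PB" and "PA + PB = (mat 1::'n::finite op)"
  shows "PCDS PA PB (kraus_map Ms)"
proof -
  have "kraus_map Ms T = kraus_map Ms (blk PA T PA) + kraus_map Ms (blk PB T PB)
          + kraus_map Ms (blk PA T PB) + kraus_map Ms (blk PB T PA)" for T
    by (subst blk_decomposition[OF assms(4), of T]) (simp add: kraus_map_add)
  then show ?thesis
    unfolding PCDS_def using assms(1-3) lin_on_blk_kraus_map by blast
qed

lemma lin_on_blk_zero:
  assumes "lin_on_blk PX PY f"
  shows "f 0 = 0"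
proof -
  have "0 \<in> blk_space PX PY"
    by (simp add: blk_space_def)
  then have "f (0 + 0) = f 0 + f 0"
    using assms unfolding lin_on_blk_def by blast
  then show ?thesis by simp
qed

lemma PCDS_swap:
  assumes "PCDS PA PB \<Phi>"
  shows "PCDS PB PA \<Phi>"
proof -
  obtain \<Phi>AA \<Phi>BB \<Phi>AB \<Phi>BA where lin: "lin_on_blk PA PA \<Phi>AA" "lin_on_blk PB PB \<Phi>BB"
      "lin_on_blk PA PB \<Phi>AB" "lin_on_blk PB PA \<Phi>BA"
    and \<Phi>: "\<And>T. \<Phi> T = \<Phi>AA (blk PA T PA) + \<Phi>BB (blk PB T PB)
                 + \<Phi>AB (blk PA T PB) + \<Phi>BA (blk PB T PA)"
    using assms unfolding PCDS_def by blast
  have "\<Phi> T = \<Phi>BB (blk PB T PB) + \<Phi>AA (blk PA T PA) + \<Phi>BA (blk PB T PA) + \<Phi>AB (blk PA T PB)" for T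
    by (simp add: \<Phi> add_ac)
  with lin show ?thesis
    unfolding PCDS_def by blast
qed

lemma PCDS_proj_blk_space:
  assumes "PCDS PA PB \<Phi>" "PA ** PA = PA" "PA ** PB = 0" "PB ** PA = 0"
  shows "\<Phi> PA \<in> blk_space PA PA"
proof -
  obtain \<Phi>AA \<Phi>BB \<Phi>AB \<Phi>BA where lin: "lin_on_blk PA PA \<Phi>AA" "lin_on_blk PB PB \<Phi>BB"
      "lin_on_blk PA PB \<Phi>AB" "lin_on_blk PB PA \<Phi>BA"
    and \<Phi>: "\<And>T. \<Phi> T = \<Phi>AA (blk PA T PA) + \<Phi>BB (blk PB T PB)
                 + \<Phi>AB (blk PA T PB) + \<Phi>BA (blk PB T PA)"
    using assms(1) unfolding PCDS_def by blast
  have "\<Phi> PA = \<Phi>AA PA"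
    using \<Phi>[of PA] lin(2-4)[THEN lin_on_blk_zero] by (simp add: blk_def assms(2-4))
  moreover have "PA \<in> blk_space PA PA"
    by (simp add: blk_space_def assms(2))
  ultimately show ?thesis
    using lin(1) by (simp add: lin_on_blk_def)
qed

lemma blk_space_compression_eq_0:
  assumes "T \<in> blk_space P P" "P ** Q = 0" "Q ** P = 0"
  shows "Q ** T ** Q = 0"
proof -
  have "Q ** T ** Q = Q ** (P ** T ** P) ** Q"
    using assms(1) by (simp add: blk_space_def)
  also have "\<dots> = (Q ** P) ** T ** (P ** Q)"
    by (simp add: matrix_mul_assoc)
  finally show ?thesis
    using assms(2,3) by simp
qed

theorem theorem1:
  fixes PA PB :: "'n::finite op" and Ms :: "'n op list"
  assumes "orth_proj PA" and "orth_proj PB"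
    and "PA \<noteq> 0" and "PB \<noteq> 0"
    and "PA ** PB = 0" and "PA + PB = mat 1"
    and "kraus_set Ms"
  shows "PCDS PA PB (kraus_map Ms) \<longleftrightarrow>
         (\<forall>M\<in>set Ms. blk PA M PB = 0 \<and> blk PB M PA = 0)"
proof
  have proj: "adj PA = PA" "PA ** PA = PA" "adj PB = PB" "PB ** PB = PB"
    using assms(1,2) by (auto simp: orth_proj_def)
  have BA: "PB ** PA = 0"
    using adj_mult_eq_0_commute proj(1,3) assms(5) by blast
  show "\<forall>M\<in>set Ms. blk PA M PB = 0 \<and> blk PB M PA = 0" if "PCDS PA PB (kraus_map Ms)"
  proof -
    have "kraus_map Ms PA \<in> blk_space PA PA" "kraus_map Ms PB \<in> blk_space PB PB"
      using PCDS_proj_blk_space[OF that] PCDS_proj_blk_space[OF PCDS_swap[OF that]]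
        proj assms(5) BA by auto
    then have "PB ** kraus_map Ms PA ** PB = 0" "PA ** kraus_map Ms PB ** PA = 0"
      using blk_space_compression_eq_0 assms(5) BA by blast+
    then show ?thesis
      using kraus_map_compression_eq_0[OF assms(1,2)] kraus_map_compression_eq_0[OF assms(2,1)]
      by (simp add: blk_def)
  qed
  show "PCDS PA PB (kraus_map Ms)" if "\<forall>M\<in>set Ms. blk PA M PB = 0 \<and> blk PB M PA = 0"
  proof (rule kraus_map_PCDS[OF _ proj(1,3) assms(6)])
    show "\<forall>M\<in>set Ms. PA ** M = M ** PA \<and> PB ** M = M ** PB"
      using that block_diagonal_commute[OF assms(6)]
        block_diagonal_commute[of PB PA] assms(6) by (simp add: blk_def add.commute)
  qed
qed

end
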